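(* Let $n\ge1$, let $\alpha=(\alpha_1,\dots,\alpha_\ell)$ be a composition of $n$, and let $V_\alpha=\{\gamma\vDash n : S_\alpha\in U_\gamma\}$ be the set of compositions $\gamma$ of $n$ for which $S_\alpha$ is $\gamma$-unimodal. Then $$|V_\alpha| = 2^{n-1}\left(\tfrac34\right)^m,$$ where $m$ is the number of indices $i\in[\ell-1]$ with $\alpha_i>1$.
   Context: A composition $\alpha=(\alpha_1,\dots,\alpha_\ell)$ of $n$ (written $\alpha\vDash n$) is a sequence of positive integers summing to $n$; $\ell=\ell(\alpha)$ is its number of parts. Set $S_\alpha=\{\alpha_1,\alpha_1+\alpha_2,\dots,\alpha_1+\dots+\alpha_{\ell-1}\}\subseteq[n-1]$. The blocks of $\alpha$ are $B_i(\alpha)=\{\alpha_1+\dots+\alpha_{i-1}+1,\dots,\alpha_1+\dots+\alpha_i\}$ for $i\in[\ell]$. A set $S\subseteq[n-1]$ is $\gamma$-unimodal (for a composition $\gamma$ of $n$) if for every block $B_i(\gamma)$ the set $S\cap(B_i(\gamma)\setminus S_\gamma)$ is an initial segment (in increasing order) of $B_i(\gamma)\setminus S_\gamma$; equivalently, $S$ is the descent set of a permutation whose restriction to each block of $\gamma$ is a word $\sigma_a>\dots>\sigma_k<\dots<\sigma_b$. $U_\gamma$ denotes the set of $\gamma$-unimodal subsets of $[n-1]$. *)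

theory Defs
  imports Complex_Main
begin

definition is_comp :: "nat \<Rightarrow> nat list \<Rightarrow> bool" where
  "is_comp n \<alpha> \<longleftrightarrow> (\<forall>a\<in>set \<alpha>. 0 < a) \<and> sum_list \<alpha> = n"

definition comp_set :: "nat list \<Rightarrow> nat set" where
  "comp_set \<alpha> = {sum_list (take i \<alpha>) | i. 1 \<le> i \<and> i < length \<alpha>}"

text \<open>Block B_i (1-indexed, i in [l]).\<close>
definition block :: "nat list \<Rightarrow> nat \<Rightarrow> nat set" where
  "block \<gamma> i = {sum_list (take (i - 1) \<gamma>) + 1 .. sum_list (take i \<gamma>)}"

definition unimodal :: "nat \<Rightarrow> nat list \<Rightarrow> nat set \<Rightarrow> bool" where
  "unimodal n \<gamma> S \<longleftrightarrow> S \<subseteq> {1..n-1} \<and>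
     (\<forall>i\<in>{1..length \<gamma>}. \<forall>x\<in>S \<inter> (block \<gamma> i - comp_set \<gamma>).
        \<forall>y\<in>block \<gamma> i - comp_set \<gamma>. y < x \<longrightarrow> y \<in> S)"

definition U :: "nat \<Rightarrow> nat list \<Rightarrow> nat set set" where
  "U n \<gamma> = {S. unimodal n \<gamma> S}"

definition V :: "nat \<Rightarrow> nat list \<Rightarrow> nat list set" where
  "V n \<alpha> = {\<gamma>. is_comp n \<gamma> \<and> comp_set \<alpha> \<in> U n \<gamma>}"

end

theory Submission
  imports Defs
begin

text \<open>
  The map \<open>\<gamma> \<mapsto> S\<^sub>\<gamma>\<close> is a bijection from the compositions of \<open>n\<close> onto the subsets
  of \<open>[n-1]\<close>. Two positions lie in a common block of \<open>\<gamma>\<close> iff no cut point \<open>t \<in> S\<^sub>\<gamma>\<close>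
  separates them, so \<open>S = S\<^sub>\<alpha>\<close> is \<open>\<gamma>\<close>-unimodal iff every element of \<open>S - S\<^sub>\<gamma>\<close>
  can walk down within \<open>S\<close> until it meets a cut. This only fails at the start \<open>p \<ge> 2\<close> of a
  maximal run of consecutive elements of \<open>S\<close>, so the condition is that \<open>S\<^sub>\<gamma>\<close> meets every
  pair \<open>{p - 1, p}\<close>. These pairs are disjoint, and meeting one excludes one of its four
  subsets, whence the factor \<open>(3/4)\<^sup>m\<close>. The run starts of \<open>S\<^sub>\<alpha>\<close> are exactly the
  partial sums \<open>\<alpha>\<^sub>1 + \<dots> + \<alpha>\<^sub>i\<close> with \<open>i < \<ell>\<close> and \<open>\<alpha>\<^sub>i > 1\<close>, so there are \<open>m\<close> of them.
\<close>

lemma sum_list_take_mono: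
  fixes g :: "nat list"
  assumes "i \<le> j"
  shows "sum_list (take i g) \<le> sum_list (take j g)"
  using assms take_add[of i "j - i" g] by simp

lemma sum_list_take_Suc:
  "i < length g \<Longrightarrow> sum_list (take (Suc i) g) = sum_list (take i g) + g ! i"
  by (simp add: take_Suc_conv_app_nth)

lemma sum_list_take_strict_mono:
  fixes g :: "nat list"
  assumes "\<forall>a\<in>set g. 0 < a" and "i < j" and "j \<le> length g"
  shows "sum_list (take i g) < sum_list (take j g)"
proof -
  have "0 < g ! i" using assms by simp
  then have "sum_list (take i g) < sum_list (take (Suc i) g)"
    using assms by (simp add: sum_list_take_Suc)
  also have "\<dots> \<le> sum_list (take j g)" using assms by (intro sum_list_take_mono) simp
  finally show ?thesis .
qed

lemma sum_list_take_less_imp_less: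
  fixes g :: "nat list"
  assumes "sum_list (take i g) < sum_list (take j g)"
  shows "i < j"
  using assms sum_list_take_mono[of j i g] by (meson not_le)

lemma comp_set_eq_image: "comp_set g = (\<lambda>i. sum_list (take i g)) ` {1..<length g}"
  by (auto simp: comp_set_def)

lemma sum_list_take_mem_comp_set:
  "1 \<le> i \<Longrightarrow> i < length g \<Longrightarrow> sum_list (take i g) \<in> comp_set g"
  by (auto simp: comp_set_def)

lemma comp_set_Cons:
  "comp_set (a # g) = (if g = [] then {} else insert a ((+) a ` comp_set g))"
proof (cases g)
  case (Cons b h)
  have "{1..<length (a # g)} = insert 1 (Suc ` {1..<length g})"
    using Cons by (auto simp: image_iff)
  then show ?thesis
    using Cons by (simp add: comp_set_eq_image image_image del: image_Suc_atLeastLessThan)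
qed (simp add: comp_set_eq_image)

lemma is_comp_Nil [simp]: "is_comp n [] \<longleftrightarrow> n = 0"
  by (auto simp: is_comp_def)

lemma is_comp_Cons: "is_comp n (a # g) \<longleftrightarrow> 0 < a \<and> a \<le> n \<and> is_comp (n - a) g"
  by (auto simp: is_comp_def)

lemma comp_set_subset:
  assumes "is_comp n g"
  shows "comp_set g \<subseteq> {1..n-1}"
proof
  fix t assume "t \<in> comp_set g"
  then obtain i where i: "1 \<le> i" "i < length g" "t = sum_list (take i g)"
    by (auto simp: comp_set_def)
  have pos: "\<forall>a\<in>set g. 0 < a" using assms by (simp add: is_comp_def)
  have "sum_list (take 0 g) < t" "t < sum_list (take (length g) g)"
    using i sum_list_take_strict_mono[OF pos, of 0 i] sum_list_take_strict_mono[OF pos, of i "length g"]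
    by auto
  then show "t \<in> {1..n-1}" using assms by (simp add: is_comp_def)
qed

lemma comp_set_inj:
  "is_comp n g \<Longrightarrow> is_comp n d \<Longrightarrow> comp_set g = comp_set d \<Longrightarrow> g = d"
proof (induction g arbitrary: n d)
  case Nil
  then show ?case by (cases d) (auto simp: is_comp_Cons)
next
  case (Cons a g)
  obtain b d' where d: "d = b # d'"
    using Cons.prems by (cases d) (auto simp: is_comp_Cons)
  have g: "0 < a" "is_comp (n - a) g" and d': "0 < b" "is_comp (n - b) d'"
    using Cons.prems d by (auto simp: is_comp_Cons)
  have above_a: "\<forall>t\<in>(+) a ` comp_set g. a < t" and above_b: "\<forall>t\<in>(+) b ` comp_set d'. b < t"
    using comp_set_subset[OF g(2)] comp_set_subset[OF d'(2)] by fastforce+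
  show ?case
  proof (cases "g = []")
    case True
    then have "d' = []" and "a = n" "b = n"
      using Cons.prems d by (auto simp: comp_set_Cons is_comp_def split: if_splits)
    then show ?thesis using True d by simp
  next
    case False
    then have "d' \<noteq> []" using Cons.prems d by (auto simp: comp_set_Cons split: if_splits)
    then have sets: "insert a ((+) a ` comp_set g) = insert b ((+) b ` comp_set d')"
      using Cons.prems d False by (simp add: comp_set_Cons)
    \<comment> \<open>both are the least element of the common set\<close>
    have "a = b"
      using sets above_a above_b by (metis insertCI insertE less_asym)
    then have "(+) a ` comp_set g = (+) a ` comp_set d'"
      using sets above_a above_b by (metis insert_ident less_irrefl)
    then have "comp_set g = comp_set d'" by (simp add: inj_image_eq_iff)
    then show ?thesis using Cons.IH[OF g(2)] d'(2) d \<open>a = b\<close> by simp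
  qed
qed

lemma comp_set_surj:
  "1 \<le> n \<Longrightarrow> T \<subseteq> {1..n-1} \<Longrightarrow> \<exists>g. is_comp n g \<and> comp_set g = T"
proof (induction n arbitrary: T rule: less_induct)
  case (less n)
  show ?case
  proof (cases "T = {}")
    case True
    then show ?thesis
      using less.prems by (intro exI[of _ "[n]"]) (simp add: is_comp_def comp_set_Cons)
  next
    case False
    define a where "a = Min T"
    have "finite T" using less.prems(2) finite_subset by blast
    then have "a \<in> T" and a_min: "\<forall>t\<in>T. a \<le> t" using False by (simp_all add: a_def)
    then have "a \<in> {1..n-1}" using less.prems(2) by blast
    then have a: "1 \<le> a" "a < n" using less.prems(1) by auto
    define T' where "T' = (\<lambda>t. t - a) ` (T - {a})"
    have T': "T' \<subseteq> {1..(n - a) - 1}"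
      using less.prems(2) a_min by (force simp: T'_def)
    have "\<exists>g. is_comp (n - a) g \<and> comp_set g = T'"
      using a by (intro less.IH[OF _ _ T']) auto
    then obtain g where g: "is_comp (n - a) g" "comp_set g = T'" by blast
    have "g \<noteq> []" using g a by auto
    have "(+) a ` T' = T - {a}"
      using a_min by (force simp: T'_def image_image)
    then have "comp_set (a # g) = T"
      using \<open>g \<noteq> []\<close> g \<open>a \<in> T\<close> by (auto simp: comp_set_Cons)
    moreover have "is_comp n (a # g)" using g a by (simp add: is_comp_Cons)
    ultimately show ?thesis by blast
  qed
qed

lemma bij_betw_comp_set:
  assumes "1 \<le> n"
  shows "bij_betw comp_set {g. is_comp n g} (Pow {1..n-1})"
proof (rule bij_betwI')
  show "comp_set g = comp_set d \<longleftrightarrow> g = d" if "g \<in> {g. is_comp n g}" "d \<in> {g. is_comp n g}" for g d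
    using that comp_set_inj by blast
  show "comp_set g \<in> Pow {1..n-1}" if "g \<in> {g. is_comp n g}" for g
    using that comp_set_subset by simp
  show "\<exists>g\<in>{g. is_comp n g}. T = comp_set g" if "T \<in> Pow {1..n-1}" for T
    using that comp_set_surj[OF assms, of T] by auto
qed

lemma same_block_iff_no_cut:
  fixes g :: "nat list"
  assumes y: "1 \<le> y" "y < x" and x: "x \<le> sum_list g"
  shows "(\<exists>i\<in>{1..length g}. x \<in> block g i \<and> y \<in> block g i) \<longleftrightarrow> {y..<x} \<inter> comp_set g = {}"
proof
  assume "\<exists>i\<in>{1..length g}. x \<in> block g i \<and> y \<in> block g i"
  then obtain i where i: "sum_list (take (i - 1) g) < y" "x \<le> sum_list (take i g)"
    by (auto simp: block_def Suc_le_eq)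
  show "{y..<x} \<inter> comp_set g = {}"
  proof (rule ccontr)
    assume "{y..<x} \<inter> comp_set g \<noteq> {}"
    then obtain j where "y \<le> sum_list (take j g)" "sum_list (take j g) < x"
      by (auto simp: comp_set_def)
    then have "i - 1 < j" "j < i"
      using i sum_list_take_less_imp_less[where i = "i - 1" and j = j and g = g]
        sum_list_take_less_imp_less[where i = j and j = i and g = g] by auto
    then show False by simp
  qed
next
  assume no_cut: "{y..<x} \<inter> comp_set g = {}"
  define i where "i = (LEAST i. x \<le> sum_list (take i g))"
  have ex: "x \<le> sum_list (take (length g) g)" using x by simp
  have i: "x \<le> sum_list (take i g)" "i \<le> length g"
    unfolding i_def
    by (rule LeastI[of "\<lambda>i. x \<le> sum_list (take i g)", OF ex],
        rule Least_le[of "\<lambda>i. x \<le> sum_list (take i g)", OF ex])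
  have "i \<noteq> 0" using i y by (cases i) auto
  then have "\<not> x \<le> sum_list (take (i - 1) g)"
    unfolding i_def by (intro not_less_Least) simp
  have "sum_list (take (i - 1) g) < y"
  proof (rule ccontr)
    assume "\<not> sum_list (take (i - 1) g) < y"
    \<comment> \<open>then the end of block i - 1 is a cut between y and x\<close>
    then have le: "y \<le> sum_list (take (i - 1) g)" by simp
    then have "i - 1 \<noteq> 0" using y by (intro notI) simp
    then have "sum_list (take (i - 1) g) \<in> comp_set g"
      using i by (intro sum_list_take_mem_comp_set) auto
    moreover have "sum_list (take (i - 1) g) \<in> {y..<x}"
      using le \<open>\<not> x \<le> sum_list (take (i - 1) g)\<close> by simp
    ultimately show False using no_cut by blast
  qed
  then have "x \<in> block g i \<and> y \<in> block g i"
    using i y by (auto simp: block_def)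
  then show "\<exists>i\<in>{1..length g}. x \<in> block g i \<and> y \<in> block g i"
    using i \<open>i \<noteq> 0\<close> by auto
qed

lemma unimodal_iff_no_cut:
  assumes "sum_list g = n"
  shows "unimodal n g S \<longleftrightarrow> S \<subseteq> {1..n-1} \<and>
    (\<forall>x\<in>S - comp_set g. \<forall>y\<in>{1..<x}. {y..<x} \<inter> comp_set g = {} \<longrightarrow> y \<in> S)"
proof (cases "S \<subseteq> {1..n-1}")
  case S: True
  have bound: "x \<le> sum_list g" if "x \<in> S" for x using subsetD[OF S that] assms by auto
  show ?thesis
  proof
    assume "unimodal n g S"
    then have unimodal: "\<forall>i\<in>{1..length g}. \<forall>x\<in>S \<inter> (block g i - comp_set g).
        \<forall>y\<in>block g i - comp_set g. y < x \<longrightarrow> y \<in> S"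
      by (simp add: unimodal_def)
    show "S \<subseteq> {1..n-1} \<and>
      (\<forall>x\<in>S - comp_set g. \<forall>y\<in>{1..<x}. {y..<x} \<inter> comp_set g = {} \<longrightarrow> y \<in> S)"
    proof (intro conjI S ballI impI)
      fix x y assume x: "x \<in> S - comp_set g" and y: "y \<in> {1..<x}"
        and no_cut: "{y..<x} \<inter> comp_set g = {}"
      have "x \<le> sum_list g" using bound x by simp
      then obtain i where "i \<in> {1..length g}" "x \<in> block g i" "y \<in> block g i"
        using same_block_iff_no_cut[of y x g] y no_cut by auto
      moreover have "y \<notin> comp_set g" using no_cut y by auto
      ultimately show "y \<in> S"
        using unimodal[rule_format, of i x y] x y by simp
    qed
  next
    assume "S \<subseteq> {1..n-1} \<and>
      (\<forall>x\<in>S - comp_set g. \<forall>y\<in>{1..<x}. {y..<x} \<inter> comp_set g = {} \<longrightarrow> y \<in> S)"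
    then have closed: "\<forall>x\<in>S - comp_set g. \<forall>y\<in>{1..<x}. {y..<x} \<inter> comp_set g = {} \<longrightarrow> y \<in> S"
      by (rule conjunct2)
    show "unimodal n g S" unfolding unimodal_def
    proof (intro conjI S ballI impI)
      fix i x y assume i: "i \<in> {1..length g}" and x: "x \<in> S \<inter> (block g i - comp_set g)"
        and y: "y \<in> block g i - comp_set g" and "y < x"
      have "1 \<le> y" using y by (auto simp: block_def)
      moreover have "x \<le> sum_list g" using bound x by simp
      ultimately have "{y..<x} \<inter> comp_set g = {}"
        using same_block_iff_no_cut[of y x g] i x y \<open>y < x\<close> by auto
      then show "y \<in> S"
        using closed[rule_format, of x y] x \<open>1 \<le> y\<close> \<open>y < x\<close> by simp
    qed
  qed
qed (simp add: unimodal_def)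

text \<open>The starts of the maximal runs of consecutive elements of \<open>S\<close>, except a run starting
  at 1, below which there is nothing to fill in.\<close>

definition run_starts :: "nat set \<Rightarrow> nat set" where
  "run_starts S = {x \<in> S. 2 \<le> x \<and> x - 1 \<notin> S}"

lemma closed_between_cuts_iff_run_starts:
  "(\<forall>x\<in>S - T. \<forall>y\<in>{1..<x}. {y..<x} \<inter> T = {} \<longrightarrow> y \<in> S) \<longleftrightarrow>
   (\<forall>p\<in>run_starts S. p \<in> T \<or> p - 1 \<in> T)"
proof
  assume closed: "\<forall>x\<in>S - T. \<forall>y\<in>{1..<x}. {y..<x} \<inter> T = {} \<longrightarrow> y \<in> S"
  show "\<forall>p\<in>run_starts S. p \<in> T \<or> p - 1 \<in> T"
  proof (intro ballI)
    fix p assume p: "p \<in> run_starts S"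
    show "p \<in> T \<or> p - 1 \<in> T"
    proof (rule ccontr)
      assume "\<not> (p \<in> T \<or> p - 1 \<in> T)"
      moreover have "{p - 1..<p} = {p - 1}" using p by (auto simp: run_starts_def)
      ultimately have "p \<in> S - T" "p - 1 \<in> {1..<p}" "{p - 1..<p} \<inter> T = {}"
        using p by (auto simp: run_starts_def)
      then have "p - 1 \<in> S" using closed by blast
      then show False using p by (simp add: run_starts_def)
    qed
  qed
next
  assume hit: "\<forall>p\<in>run_starts S. p \<in> T \<or> p - 1 \<in> T"
  show "\<forall>x\<in>S - T. \<forall>y\<in>{1..<x}. {y..<x} \<inter> T = {} \<longrightarrow> y \<in> S"
  proof (intro ballI impI)
    fix x y assume x: "x \<in> S - T" and y: "y \<in> {1..<x}"
    then have "y \<le> x" by simp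
    then show "{y..<x} \<inter> T = {} \<Longrightarrow> y \<in> S"
    proof (induction y rule: inc_induct)
      case (step m)
      have "{Suc m..<x} \<subseteq> {m..<x}" by auto
      then have "{Suc m..<x} \<inter> T = {}" using step.prems by blast
      then have "Suc m \<in> S" by (rule step.IH)
      moreover have "Suc m \<notin> T"
      proof (cases "Suc m = x")
        case False
        then have "Suc m \<in> {m..<x}" using step.hyps by simp
        then show ?thesis using step.prems by blast
      qed (use x in simp)
      moreover have "m \<notin> T" using step.prems step.hyps by auto
      moreover have "1 \<le> m" using step.hyps y by simp
      ultimately show "m \<in> S" using hit by (force simp: run_starts_def)
    qed (use x in simp)
  qed
qed

lemma unimodal_iff_run_starts:
  assumes "sum_list g = n"
  shows "unimodal n g S \<longleftrightarrow>
    S \<subseteq> {1..n-1} \<and> (\<forall>p\<in>run_starts S. p \<in> comp_set g \<or> p - 1 \<in> comp_set g)"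
  unfolding unimodal_iff_no_cut[OF assms] closed_between_cuts_iff_run_starts ..

lemma run_starts_comp_set:
  assumes pos: "\<forall>a\<in>set g. 0 < a"
  shows "run_starts (comp_set g) =
    (\<lambda>i. sum_list (take i g)) ` {i \<in> {1..length g - 1}. 1 < g ! (i - 1)}"
proof (rule set_eqI, rule iffI)
  fix x assume x: "x \<in> run_starts (comp_set g)"
  then obtain i where i: "1 \<le> i" "i < length g" "x = sum_list (take i g)"
    by (auto simp: run_starts_def comp_set_def)
  have step: "x = sum_list (take (i - 1) g) + g ! (i - 1)"
    using i sum_list_take_Suc[of "i - 1" g] by simp
  have "1 < g ! (i - 1)"
  proof (rule ccontr)
    assume "\<not> 1 < g ! (i - 1)"
    moreover have "0 < g ! (i - 1)" using pos i by simp
    ultimately have "g ! (i - 1) = 1" by simp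
    show False
    proof (cases "i = 1")
      case True
      then show False using x step \<open>g ! (i - 1) = 1\<close> by (simp add: run_starts_def)
    next
      case False
      have "x - 1 = sum_list (take (i - 1) g)" using step \<open>g ! (i - 1) = 1\<close> by simp
      moreover have "sum_list (take (i - 1) g) \<in> comp_set g"
        using i False by (intro sum_list_take_mem_comp_set) auto
      ultimately have "x - 1 \<in> comp_set g" by simp
      then show False using x by (simp add: run_starts_def)
    qed
  qed
  then show "x \<in> (\<lambda>i. sum_list (take i g)) ` {i \<in> {1..length g - 1}. 1 < g ! (i - 1)}"
    using i by auto
next
  fix x assume "x \<in> (\<lambda>i. sum_list (take i g)) ` {i \<in> {1..length g - 1}. 1 < g ! (i - 1)}"
  then obtain i where i: "1 \<le> i" "i < length g" "1 < g ! (i - 1)" "x = sum_list (take i g)"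
    by auto
  have step: "x = sum_list (take (i - 1) g) + g ! (i - 1)"
    using i sum_list_take_Suc[of "i - 1" g] by simp
  have "x - 1 \<notin> comp_set g"
  proof
    assume "x - 1 \<in> comp_set g"
    then obtain j where "x - 1 = sum_list (take j g)" by (auto simp: comp_set_def)
    then have "sum_list (take (i - 1) g) < sum_list (take j g)"
      and "sum_list (take j g) < sum_list (take i g)"
      using i step by auto
    then have "i - 1 < j" "j < i" by (auto dest: sum_list_take_less_imp_less)
    then show False by simp
  qed
  then show "x \<in> run_starts (comp_set g)"
    using i step by (auto simp: run_starts_def intro: sum_list_take_mem_comp_set)
qed

lemma card_run_starts_comp_set:
  assumes "\<forall>a\<in>set g. 0 < a"
  shows "card (run_starts (comp_set g)) = card {i \<in> {1..length g - 1}. 1 < g ! (i - 1)}"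
proof -
  have "inj_on (\<lambda>i. sum_list (take i g)) {i \<in> {1..length g - 1}. 1 < g ! (i - 1)}"
  proof (rule inj_onI)
    fix i j assume "i \<in> {i \<in> {1..length g - 1}. 1 < g ! (i - 1)}"
      "j \<in> {i \<in> {1..length g - 1}. 1 < g ! (i - 1)}"
      and eq: "sum_list (take i g) = sum_list (take j g)"
    then have "i \<le> length g" "j \<le> length g" by auto
    then show "i = j"
      using eq sum_list_take_strict_mono[OF assms, of i j] sum_list_take_strict_mono[OF assms, of j i]
      by (cases i j rule: linorder_cases) auto
  qed
  then show ?thesis by (simp add: run_starts_comp_set[OF assms] card_image)
qed

lemma card_subsets_split:
  assumes "D \<subseteq> X"
  shows "card {T. T \<subseteq> X \<and> R (T - D) \<and> Q (T \<inter> D)} =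
    card {T. T \<subseteq> X - D \<and> R T} * card {E. E \<subseteq> D \<and> Q E}"
proof -
  have split: "T \<union> E - D = T" "(T \<union> E) \<inter> D = E" if "T \<subseteq> X - D" "E \<subseteq> D" for T E
    using that by auto
  have "bij_betw (\<lambda>T. (T - D, T \<inter> D)) {T. T \<subseteq> X \<and> R (T - D) \<and> Q (T \<inter> D)}
      ({T. T \<subseteq> X - D \<and> R T} \<times> {E. E \<subseteq> D \<and> Q E})"
    by (rule bij_betw_byWitness[where f' = "\<lambda>(T, E). T \<union> E"]) (use split assms in auto)
  then show ?thesis by (simp add: bij_betw_same_card card_cartesian_product)
qed

lemma card_subsets_meeting_pairs:
  fixes f :: "'a \<Rightarrow> 'a"
  assumes "finite P" and "finite X"
    and "\<forall>p\<in>P. p \<in> X \<and> f p \<in> X \<and> f p \<noteq> p \<and> f p \<notin> P" and "inj_on f P"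
  shows "card {T. T \<subseteq> X \<and> (\<forall>p\<in>P. p \<in> T \<or> f p \<in> T)} * 4 ^ card P = 2 ^ card X * 3 ^ card P"
  using assms
proof (induction P arbitrary: X rule: finite_induct)
  case empty
  have "{T. T \<subseteq> X} = Pow X" by auto
  then show ?case using empty.prems by (simp add: card_Pow)
next
  case (insert p P)
  let ?meets = "\<lambda>T. \<forall>q\<in>P. q \<in> T \<or> f q \<in> T"
  define D where "D = {p, f p}"
  have D: "D \<subseteq> X" "card D = 2" "finite D" using insert.prems by (auto simp: D_def)
  have disjoint: "q \<notin> D \<and> f q \<notin> D" if "q \<in> P" for q
    using that insert.hyps insert.prems by (auto simp: D_def inj_on_def)
  have "{T. T \<subseteq> X \<and> (\<forall>q\<in>insert p P. q \<in> T \<or> f q \<in> T)} =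
      {T. T \<subseteq> X \<and> ?meets (T - D) \<and> T \<inter> D \<noteq> {}}"
    using disjoint by (auto simp: D_def)
  moreover have "card {E. E \<subseteq> D \<and> E \<noteq> {}} = 3"
  proof -
    have "{E. E \<subseteq> D \<and> E \<noteq> {}} = Pow D - {{}}" by auto
    then show ?thesis using D by (simp add: card_Pow card_Diff_singleton)
  qed
  ultimately have split: "card {T. T \<subseteq> X \<and> (\<forall>q\<in>insert p P. q \<in> T \<or> f q \<in> T)} =
      card {T. T \<subseteq> X - D \<and> ?meets T} * 3"
    using card_subsets_split[OF D(1), of ?meets "\<lambda>E. E \<noteq> {}"] by simp
  have IH: "card {T. T \<subseteq> X - D \<and> ?meets T} * 4 ^ card P = 2 ^ card (X - D) * 3 ^ card P"
    using insert.IH[of "X - D"] insert.prems disjoint by (simp add: inj_on_insert)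
  have "card X = card (X - D) + 2"
    using D card_Diff_subset[OF D(3) D(1)] card_mono[OF _ D(1)] insert.prems by simp
  then show ?case
    using split IH insert.hyps by (simp add: power_add)
qed

lemma bij_betw_Collect_image:
  "bij_betw f A B \<Longrightarrow> bij_betw f {a \<in> A. P (f a)} {b \<in> B. P b}"
  unfolding bij_betw_def inj_on_def by auto

lemma card_V_eq_card_meeting_run_starts:
  assumes "1 \<le> n" and "is_comp n \<alpha>"
  shows "card (V n \<alpha>) =
    card {T \<in> Pow {1..n-1}. \<forall>p\<in>run_starts (comp_set \<alpha>). p \<in> T \<or> p - 1 \<in> T}"
proof -
  let ?meets = "\<lambda>T. \<forall>p\<in>run_starts (comp_set \<alpha>). p \<in> T \<or> p - 1 \<in> T"
  have "unimodal n g (comp_set \<alpha>) \<longleftrightarrow> ?meets (comp_set g)" if "is_comp n g" for g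
    using comp_set_subset[OF assms(2)] that unimodal_iff_run_starts[of g n]
    by (simp add: is_comp_def)
  then have "V n \<alpha> = {g \<in> {g. is_comp n g}. ?meets (comp_set g)}"
    unfolding V_def U_def by blast
  then have "bij_betw comp_set (V n \<alpha>) {T \<in> Pow {1..n-1}. ?meets T}"
    using bij_betw_Collect_image[OF bij_betw_comp_set[OF assms(1)]] by simp
  then show ?thesis by (rule bij_betw_same_card)
qed

lemma card_subsets_meeting_run_starts:
  assumes "S \<subseteq> {1..n-1}"
  shows "card {T \<in> Pow {1..n-1}. \<forall>p\<in>run_starts S. p \<in> T \<or> p - 1 \<in> T} * 4 ^ card (run_starts S) =
    2 ^ (n - 1) * 3 ^ card (run_starts S)"
proof -
  have "\<forall>p\<in>run_starts S. p \<in> {1..n-1} \<and> p - 1 \<in> {1..n-1} \<and> p - 1 \<noteq> p \<and> p - 1 \<notin> run_starts S"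
    using assms by (auto simp: run_starts_def)
  moreover have "inj_on (\<lambda>p. p - 1) (run_starts S)"
    by (auto simp: run_starts_def inj_on_def)
  moreover have "finite (run_starts S)"
    using assms by (simp add: run_starts_def finite_subset)
  ultimately show ?thesis
    using card_subsets_meeting_pairs[of "run_starts S" "{1..n-1}" "\<lambda>p. p - 1"] by simp
qed

theorem proposition2p1:
  fixes n :: nat and \<alpha> :: "nat list"
  assumes "n \<ge> 1" and "is_comp n \<alpha>"
  shows "real (card (V n \<alpha>)) =
    2 ^ (n - 1) * (3 / 4) ^ card {i \<in> {1..length \<alpha> - 1}. \<alpha> ! (i - 1) > 1}"
proof -
  let ?m = "card {i \<in> {1..length \<alpha> - 1}. \<alpha> ! (i - 1) > 1}"
  have "card (run_starts (comp_set \<alpha>)) = ?m"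
    using assms(2) by (simp add: card_run_starts_comp_set is_comp_def)
  then have "card (V n \<alpha>) * 4 ^ ?m = 2 ^ (n - 1) * 3 ^ ?m"
    using card_V_eq_card_meeting_run_starts[OF assms]
      card_subsets_meeting_run_starts[OF comp_set_subset[OF assms(2)]] by simp
  then have "real (card (V n \<alpha>) * 4 ^ ?m) = real (2 ^ (n - 1) * 3 ^ ?m)"
    by (simp only:)
  then show ?thesis by (simp add: power_divide eq_divide_eq)
qed

end
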